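(* Let $\mathcal{R}=(\mathcal{F},R)$ be a 3-DCTRS. If $\mathcal{R}$ is terminating, the transformation $\mathcal{U}$ preserves $\to_{\mathcal{R}}$-irreducibility of $\mathcal{R}$, and the TRS $\mathcal{U}(\mathcal{R})$ is confluent, then $\mathcal{R}$ is confluent.
   Context: An oriented CTRS $\mathcal{R}=(\mathcal{F},R)$ has rules $\ell\to r\Leftarrow s_1\approx t_1,\dots,s_n\approx t_n$ ($\ell$ not a variable, $n\ge 0$) where conditions are reachability tests: $s\to_{\mathcal{R}}t$ iff there are a rule, a position $p$ of $s$ and a substitution $\sigma$ with $s|_p=\sigma(\ell)$, $\sigma(s_j)\to^*_{\mathcal{R}}\sigma(t_j)$ for all $j$, and $t=s[\sigma(r)]_p$ (least such relation). It is deterministic (a DCTRS) if for each rule and each $1\le i\le n$, $\mathrm{Var}(s_i)\subseteq\mathrm{Var}(\ell)\cup\bigcup_{j=1}^{i-1}\mathrm{Var}(t_j)$; it is a 3-CTRS if for each rule $\mathrm{Var}(r)\subseteq\mathrm{Var}(\ell)\cup\bigcup_j(\mathrm{Var}(s_j)\cup\mathrm{Var}(t_j))$. $\mathcal{R}$ is terminating if there is no infinite $\to_{\mathcal{R}}$-sequence, and confluent if any two $\to^*_{\mathcal{R}}$-reducts of a common term have a common $\to^*_{\mathcal{R}}$-reduct. Transformation $\mathcal{U}$: each conditional rule $\alpha:\ell\to r\Leftarrow s_1\approx t_1,\dots,s_n\approx t_n$ ($n\ge1$) is replaced by the unconditional rules $\ell\to U^\alpha_1(s_1,\vec x_1)$,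 $U^\alpha_{i-1}(t_{i-1},\vec x_{i-1})\to U^\alpha_i(s_i,\vec x_i)$ for $2\le i\le n$, and $U^\alpha_n(t_n,\vec x_n)\to r$, where the $U^\alpha_i$ are fresh function symbols and $\vec x_i$ is a sequence of the variables in $\mathrm{Var}(\ell)\cup\mathrm{Var}(t_1)\cup\dots\cup\mathrm{Var}(t_{i-1})$; unconditional rules are kept. $\mathcal{U}(\mathcal{R})=(\mathcal{U}(\mathcal{F}),\mathcal{U}(R))$ is the resulting TRS over $\mathcal{F}$ extended with the new symbols. $\mathcal{U}$ preserves $\to_{\mathcal{R}}$-irreducibility if every term $t$ over $\mathcal{F}$ and variables that is $\to_{\mathcal{R}}$-irreducible is also $\to_{\mathcal{U}(\mathcal{R})}$-irreducible. *)

theory Defs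
  imports Main
begin

datatype ('f, 'v) "term" = Var 'v | Fun 'f "('f, 'v) term list"

fun vars_term :: "('f, 'v) term \<Rightarrow> 'v set" where
  "vars_term (Var x) = {x}"
| "vars_term (Fun f ts) = (\<Union>t\<in>set ts. vars_term t)"

fun vars_list_aux :: "('f, 'v) term \<Rightarrow> 'v list" where
  "vars_list_aux (Var x) = [x]"
| "vars_list_aux (Fun f ts) = concat (map vars_list_aux ts)"

definition vars_list :: "('f, 'v) term \<Rightarrow> 'v list" where
  "vars_list t = remdups (vars_list_aux t)"

fun subst :: "('v \<Rightarrow> ('f, 'w) term) \<Rightarrow> ('f, 'v) term \<Rightarrow> ('f, 'w) term" where
  "subst \<sigma> (Var x) = \<sigma> x"
| "subst \<sigma> (Fun f ts) = Fun f (map (subst \<sigma>) ts)"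

datatype ('f, 'v) ctxt = Hole | More 'f "('f, 'v) term list" "('f, 'v) ctxt" "('f, 'v) term list"

fun ctxt_apply :: "('f, 'v) ctxt \<Rightarrow> ('f, 'v) term \<Rightarrow> ('f, 'v) term" where
  "ctxt_apply Hole t = t"
| "ctxt_apply (More f ss1 C ss2) t = Fun f (ss1 @ ctxt_apply C t # ss2)"

fun map_funs :: "('f \<Rightarrow> 'g) \<Rightarrow> ('f, 'v) term \<Rightarrow> ('g, 'v) term" where
  "map_funs h (Var x) = Var x"
| "map_funs h (Fun f ts) = Fun (h f) (map (map_funs h) ts)"

inductive trs_step :: "(('f, 'v) term \<times> ('f, 'v) term) set \<Rightarrow> ('f, 'v) term \<Rightarrow> ('f, 'v) term \<Rightarrow> bool"
  for S where
  "(l, r) \<in> S \<Longrightarrow> trs_step S (ctxt_apply C (subst \<sigma> l)) (ctxt_apply C (subst \<sigma> r))"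

text \<open>A conditional rule \<open>l \<rightarrow> r \<Leftarrow> s1 \<approx> t1, ..., sn \<approx> tn\<close> is the triple
  \<open>(l, r, [(s1,t1), ..., (sn,tn)])\<close>.\<close>
type_synonym ('f, 'v) crule = "('f, 'v) term \<times> ('f, 'v) term \<times> (('f, 'v) term \<times> ('f, 'v) term) list"

inductive cstep :: "('f, 'v) crule set \<Rightarrow> ('f, 'v) term \<Rightarrow> ('f, 'v) term \<Rightarrow> bool"
  for R where
  "(l, r, cs) \<in> R \<Longrightarrow> (\<forall>st\<in>set cs. (cstep R)\<^sup>*\<^sup>* (subst \<sigma> (fst st)) (subst \<sigma> (snd st)))
   \<Longrightarrow> cstep R (ctxt_apply C (subst \<sigma> l)) (ctxt_apply C (subst \<sigma> r))"
  monos rtranclp_mono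

definition ctrs :: "('f, 'v) crule set \<Rightarrow> bool" where
  "ctrs R \<longleftrightarrow> (\<forall>(l, r, cs)\<in>R. \<exists>f ts. l = Fun f ts)"

definition deterministic :: "('f, 'v) crule set \<Rightarrow> bool" where
  "deterministic R \<longleftrightarrow> (\<forall>(l, r, cs)\<in>R. \<forall>i < length cs.
      vars_term (fst (cs ! i)) \<subseteq> vars_term l \<union> (\<Union>j<i. vars_term (snd (cs ! j))))"

definition type3 :: "('f, 'v) crule set \<Rightarrow> bool" where
  "type3 R \<longleftrightarrow> (\<forall>(l, r, cs)\<in>R.
      vars_term r \<subseteq> vars_term l \<union> (\<Union>(s, t)\<in>set cs. vars_term s \<union> vars_term t))"

definition dctrs3 :: "('f, 'v) crule set \<Rightarrow> bool" where
  "dctrs3 R \<longleftrightarrow> ctrs R \<and> deterministic R \<and> type3 R"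

definition terminating :: "('a \<Rightarrow> 'a \<Rightarrow> bool) \<Rightarrow> bool" where
  "terminating r \<longleftrightarrow> \<not> (\<exists>f. \<forall>i. r (f i) (f (Suc i)))"

definition confluent :: "('a \<Rightarrow> 'a \<Rightarrow> bool) \<Rightarrow> bool" where
  "confluent r \<longleftrightarrow> (\<forall>s t u. r\<^sup>*\<^sup>* s t \<and> r\<^sup>*\<^sup>* s u \<longrightarrow> (\<exists>v. r\<^sup>*\<^sup>* t v \<and> r\<^sup>*\<^sup>* u v))"

text \<open>Extended signature: original symbols plus fresh symbols \<open>U^\<alpha>_i\<close>.\<close>
datatype ('f, 'v) usym = Orig 'f | Usym "('f, 'v) crule" nat

abbreviation emb :: "('f, 'v) term \<Rightarrow> (('f, 'v) usym, 'v) term" where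
  "emb \<equiv> map_funs Orig"

text \<open>The variable sequence \<open>x_i\<close> of \<open>U^\<alpha>_i\<close> (1-based \<open>i\<close>): the variables of
  \<open>l, t_1, ..., t_{i-1}\<close> in order of first occurrence.\<close>
definition uvars :: "('f, 'v) crule \<Rightarrow> nat \<Rightarrow> 'v list" where
  "uvars \<alpha> i = (case \<alpha> of (l, r, cs) \<Rightarrow>
     remdups (vars_list l @ concat (map (\<lambda>st. vars_list (snd st)) (take (i - 1) cs))))"

definition Uterm :: "('f, 'v) crule \<Rightarrow> nat \<Rightarrow> ('f, 'v) term \<Rightarrow> (('f, 'v) usym, 'v) term" where
  "Uterm \<alpha> i u = Fun (Usym \<alpha> i) (emb u # map Var (uvars \<alpha> i))"

definition U_rules :: "('f, 'v) crule \<Rightarrow> ((('f, 'v) usym, 'v) term \<times> (('f, 'v) usym, 'v) term) set" where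
  "U_rules \<alpha> = (case \<alpha> of (l, r, cs) \<Rightarrow>
     if cs = [] then {(emb l, emb r)}
     else {(emb l, Uterm \<alpha> 1 (fst (cs ! 0)))}
        \<union> {(Uterm \<alpha> (i - 1) (snd (cs ! (i - 2))), Uterm \<alpha> i (fst (cs ! (i - 1)))) | i. 2 \<le> i \<and> i \<le> length cs}
        \<union> {(Uterm \<alpha> (length cs) (snd (cs ! (length cs - 1))), emb r)})"

definition U_trs :: "('f, 'v) crule set \<Rightarrow> ((('f, 'v) usym, 'v) term \<times> (('f, 'v) usym, 'v) term) set" where
  "U_trs R = (\<Union>\<alpha>\<in>R. U_rules \<alpha>)"

definition preserves_irreducibility :: "('f, 'v) crule set \<Rightarrow> bool" where
  "preserves_irreducibility R \<longleftrightarrow>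
     (\<forall>t :: ('f, 'v) term. (\<nexists>u. cstep R t u) \<longrightarrow> (\<nexists>u. trs_step (U_trs R) (emb t) u))"

end

theory Submission
  imports Defs
begin

text \<open>Every \<open>R\<close>-step is simulated by \<open>U(R)\<close>-steps between the embedded terms: the conditions
  \<open>\<sigma>(s\<^sub>i) \<rightarrow>* \<sigma>(t\<^sub>i)\<close> are evaluated one after the other in the first argument of the symbols
  \<open>U\<^sup>\<alpha>\<^sub>i\<close>. Two \<open>R\<close>-reducts of a common term can, by termination, be further reduced to
  \<open>R\<close>-normal forms. Their embeddings are then \<open>U(R)\<close>-reducts of a common term and, because \<open>U\<close>
  preserves irreducibility, \<open>U(R)\<close>-normal forms; confluence of \<open>U(R)\<close> makes them equal, and the
  embedding is injective.\<close>

lemma rtranclp_simulation: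
  assumes "\<And>x y. r x y \<Longrightarrow> s\<^sup>*\<^sup>* (h x) (h y)"
    and "r\<^sup>*\<^sup>* a b"
  shows "s\<^sup>*\<^sup>* (h a) (h b)"
  using assms(2) by induction (auto intro: rtranclp_trans assms(1))

lemma terminating_imp_normal_form:
  assumes "terminating r"
  obtains n where "r\<^sup>*\<^sup>* x n" and "\<nexists>u. r n u"
proof -
  have "wf {(y, x). r x y}"
    using assms unfolding terminating_def wf_iff_no_infinite_down_chain by auto
  then have "\<exists>n. r\<^sup>*\<^sup>* x n \<and> (\<nexists>u. r n u)"
  proof (induction x rule: wf_induct_rule)
    case (less x)
    show ?case
    proof (cases "\<exists>u. r x u")
      case True
      then obtain u where "r x u" by blast
      with less obtain n where "r\<^sup>*\<^sup>* u n" "\<nexists>v. r n v" by blast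
      with \<open>r x u\<close> show ?thesis by (meson converse_rtranclp_into_rtranclp)
    qed auto
  qed
  then show thesis using that by blast
qed

lemma normal_form_rtranclp_eq:
  assumes "\<nexists>u. r a u" and "r\<^sup>*\<^sup>* a b"
  shows "b = a"
  using assms(2,1) by (cases rule: converse_rtranclpE) auto

lemma confluent_by_simulation:
  assumes "terminating r"
    and "confluent s"
    and "inj h"
    and simulation: "\<And>x y. r x y \<Longrightarrow> s\<^sup>*\<^sup>* (h x) (h y)"
    and normal_forms: "\<And>x. \<nexists>y. r x y \<Longrightarrow> \<nexists>y. s (h x) y"
  shows "confluent r"
  unfolding confluent_def
proof (intro allI impI, elim conjE)
  fix a b c
  assume "r\<^sup>*\<^sup>* a b" and "r\<^sup>*\<^sup>* a c"
  obtain b' where "r\<^sup>*\<^sup>* b b'" and b'_nf: "\<nexists>u. r b' u"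
    using assms(1) by (rule terminating_imp_normal_form)
  obtain c' where "r\<^sup>*\<^sup>* c c'" and c'_nf: "\<nexists>u. r c' u"
    using assms(1) by (rule terminating_imp_normal_form)
  have "s\<^sup>*\<^sup>* (h a) (h b')"
    using simulation rtranclp_trans[OF \<open>r\<^sup>*\<^sup>* a b\<close> \<open>r\<^sup>*\<^sup>* b b'\<close>] by (rule rtranclp_simulation)
  moreover have "s\<^sup>*\<^sup>* (h a) (h c')"
    using simulation rtranclp_trans[OF \<open>r\<^sup>*\<^sup>* a c\<close> \<open>r\<^sup>*\<^sup>* c c'\<close>] by (rule rtranclp_simulation)
  ultimately obtain d where b'_d: "s\<^sup>*\<^sup>* (h b') d" and c'_d: "s\<^sup>*\<^sup>* (h c') d"
    using assms(2) unfolding confluent_def by blast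
  have "d = h b'"
    using normal_forms[OF b'_nf] b'_d by (rule normal_form_rtranclp_eq)
  moreover have "d = h c'"
    using normal_forms[OF c'_nf] c'_d by (rule normal_form_rtranclp_eq)
  ultimately have "h b' = h c'"
    by simp
  with \<open>inj h\<close> have "b' = c'"
    by (rule injD)
  then show "\<exists>d. r\<^sup>*\<^sup>* b d \<and> r\<^sup>*\<^sup>* c d"
    using \<open>r\<^sup>*\<^sup>* b b'\<close> \<open>r\<^sup>*\<^sup>* c c'\<close> by blast
qed

lemma map_funs_subst: "map_funs h (subst \<sigma> t) = subst (map_funs h \<circ> \<sigma>) (map_funs h t)"
  by (induction t) auto

lemma inj_map_funs:
  assumes "inj h"
  shows "inj (map_funs h :: ('f, 'v) term \<Rightarrow> ('g, 'v) term)"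
proof (rule injI)
  fix s t :: "('f, 'v) term"
  show "map_funs h s = map_funs h t \<Longrightarrow> s = t"
  proof (induction s arbitrary: t)
    case (Var x)
    then show ?case by (cases t) auto
  next
    case (Fun f ss)
    then obtain g ts where t: "t = Fun g ts" and "h f = h g" and args: "map (map_funs h) ss = map (map_funs h) ts"
      by (cases t) auto
    have "f = g"
      using \<open>inj h\<close> \<open>h f = h g\<close> by (rule injD)
    moreover have "ss = ts"
      by (rule list.inj_map_strong[OF _ args]) (use Fun.IH in blast)
    ultimately show ?case
      unfolding t by simp
  qed
qed

lemma trs_step_subst_rule: "(l, r) \<in> S \<Longrightarrow> trs_step S (subst \<tau> l) (subst \<tau> r)"
  using trs_step.intros[of l r S Hole \<tau>] by simp

lemma trs_step_Fun:
  "trs_step S a b \<Longrightarrow> trs_step S (Fun f (ss1 @ a # ss2)) (Fun f (ss1 @ b # ss2))"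
proof (induction rule: trs_step.induct)
  case (1 l r C \<sigma>)
  then show ?case using trs_step.intros[OF 1, of "More f ss1 C ss2" \<sigma>] by simp
qed

lemma trs_steps_Fun:
  "(trs_step S)\<^sup>*\<^sup>* a b \<Longrightarrow> (trs_step S)\<^sup>*\<^sup>* (Fun f (ss1 @ a # ss2)) (Fun f (ss1 @ b # ss2))"
  by (rule rtranclp_simulation[where h = "\<lambda>a. Fun f (ss1 @ a # ss2)"]) (auto intro: trs_step_Fun)

lemma trs_steps_emb_ctxt:
  "(trs_step S)\<^sup>*\<^sup>* (emb a) (emb b) \<Longrightarrow> (trs_step S)\<^sup>*\<^sup>* (emb (ctxt_apply C a)) (emb (ctxt_apply C b))"
proof (induction C)
  case (More f ss1 C ss2)
  then show ?case
    using trs_steps_Fun[of S _ _ "Orig f" "map emb ss1" "map emb ss2"] by simp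
qed simp

lemma U_trs_steps_Uterm:
  assumes "(trs_step S)\<^sup>*\<^sup>* (emb (subst \<sigma> s)) (emb (subst \<sigma> t))"
  shows "(trs_step S)\<^sup>*\<^sup>* (subst (emb \<circ> \<sigma>) (Uterm \<alpha> i s)) (subst (emb \<circ> \<sigma>) (Uterm \<alpha> i t))"
  using trs_steps_Fun[OF assms, of "Usym \<alpha> i" "[]"] by (simp add: Uterm_def map_funs_subst)

lemma U_rules_subset_U_trs: "\<alpha> \<in> R \<Longrightarrow> U_rules \<alpha> \<subseteq> U_trs R"
  unfolding U_trs_def by blast

lemma U_rules_unconditional: "(emb l, emb r) \<in> U_rules (l, r, [])"
  unfolding U_rules_def by simp

lemma U_rules_first:
  "cs \<noteq> [] \<Longrightarrow> (emb l, Uterm (l, r, cs) 1 (fst (cs ! 0))) \<in> U_rules (l, r, cs)"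
  unfolding U_rules_def by simp

lemma U_rules_next:
  assumes "Suc k < length cs"
  shows "(Uterm (l, r, cs) (Suc k) (snd (cs ! k)), Uterm (l, r, cs) (Suc (Suc k)) (fst (cs ! Suc k)))
    \<in> U_rules (l, r, cs)"
proof -
  have "cs \<noteq> []" using assms by auto
  moreover have "(Uterm (l, r, cs) (Suc k) (snd (cs ! k)), Uterm (l, r, cs) (Suc (Suc k)) (fst (cs ! Suc k)))
    \<in> {(Uterm (l, r, cs) (i - 1) (snd (cs ! (i - 2))), Uterm (l, r, cs) i (fst (cs ! (i - 1)))) | i.
        2 \<le> i \<and> i \<le> length cs}"
    using assms by (intro CollectI exI[of _ "Suc (Suc k)"]) (simp add: numeral_2_eq_2)
  ultimately show ?thesis
    unfolding U_rules_def by simp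
qed

lemma U_rules_last:
  "cs \<noteq> [] \<Longrightarrow> (Uterm (l, r, cs) (length cs) (snd (cs ! (length cs - 1))), emb r) \<in> U_rules (l, r, cs)"
  unfolding U_rules_def by simp

lemma U_trs_step_U_rule:
  "\<alpha> \<in> R \<Longrightarrow> (a, b) \<in> U_rules \<alpha> \<Longrightarrow> trs_step (U_trs R) (subst \<tau> a) (subst \<tau> b)"
  using U_rules_subset_U_trs by (blast intro: trs_step_subst_rule)

lemma U_trs_steps_to_Uterm:
  assumes "(l, r, cs) \<in> R"
    and conds: "\<And>s t. (s, t) \<in> set cs \<Longrightarrow> (trs_step (U_trs R))\<^sup>*\<^sup>* (emb (subst \<sigma> s)) (emb (subst \<sigma> t))"
    and "k < length cs"
  shows "(trs_step (U_trs R))\<^sup>*\<^sup>* (subst (emb \<circ> \<sigma>) (emb l))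
    (subst (emb \<circ> \<sigma>) (Uterm (l, r, cs) (Suc k) (snd (cs ! k))))"
proof -
  let ?S = "trs_step (U_trs R)" and ?\<tau> = "emb \<circ> \<sigma>" and ?\<alpha> = "(l, r, cs)"
  have cond_steps: "?S\<^sup>*\<^sup>* (subst ?\<tau> (Uterm ?\<alpha> i (fst (cs ! j)))) (subst ?\<tau> (Uterm ?\<alpha> i (snd (cs ! j))))"
    if "j < length cs" for i j
    using that by (intro U_trs_steps_Uterm conds) simp
  show ?thesis
    using \<open>k < length cs\<close>
  proof (induction k)
    case 0
    have "?S (subst ?\<tau> (emb l)) (subst ?\<tau> (Uterm ?\<alpha> 1 (fst (cs ! 0))))"
      by (rule U_trs_step_U_rule[OF assms(1) U_rules_first]) (use 0 in auto)
    also have "?S\<^sup>*\<^sup>* \<dots> (subst ?\<tau> (Uterm ?\<alpha> 1 (snd (cs ! 0))))"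
      by (rule cond_steps[OF 0])
    finally show ?case
      by (simp only: One_nat_def)
  next
    case (Suc k)
    have "?S\<^sup>*\<^sup>* (subst ?\<tau> (emb l)) (subst ?\<tau> (Uterm ?\<alpha> (Suc k) (snd (cs ! k))))"
      using Suc_lessD[OF Suc.prems] by (rule Suc.IH)
    also have "?S \<dots> (subst ?\<tau> (Uterm ?\<alpha> (Suc (Suc k)) (fst (cs ! Suc k))))"
      using assms(1) U_rules_next[OF Suc.prems] by (rule U_trs_step_U_rule)
    also have "?S\<^sup>*\<^sup>* \<dots> (subst ?\<tau> (Uterm ?\<alpha> (Suc (Suc k)) (snd (cs ! Suc k))))"
      by (rule cond_steps[OF Suc.prems])
    finally show ?case .
  qed
qed

lemma U_trs_steps_root:
  assumes "(l, r, cs) \<in> R"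
    and conds: "\<And>s t. (s, t) \<in> set cs \<Longrightarrow> (trs_step (U_trs R))\<^sup>*\<^sup>* (emb (subst \<sigma> s)) (emb (subst \<sigma> t))"
  shows "(trs_step (U_trs R))\<^sup>*\<^sup>* (emb (subst \<sigma> l)) (emb (subst \<sigma> r))"
  unfolding map_funs_subst
proof (cases "cs = []")
  case True
  have "trs_step (U_trs R) (subst (emb \<circ> \<sigma>) (emb l)) (subst (emb \<circ> \<sigma>) (emb r))"
    using assms(1) U_rules_unconditional unfolding True by (rule U_trs_step_U_rule)
  then show "(trs_step (U_trs R))\<^sup>*\<^sup>* (subst (emb \<circ> \<sigma>) (emb l)) (subst (emb \<circ> \<sigma>) (emb r))" ..
next
  case False
  then obtain n where n: "length cs = Suc n"
    by (cases cs) auto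
  have "(trs_step (U_trs R))\<^sup>*\<^sup>* (subst (emb \<circ> \<sigma>) (emb l))
      (subst (emb \<circ> \<sigma>) (Uterm (l, r, cs) (length cs) (snd (cs ! (length cs - 1)))))"
    using U_trs_steps_to_Uterm[OF assms(1) conds, of n] unfolding n diff_Suc_1 by simp
  also have "trs_step (U_trs R) \<dots> (subst (emb \<circ> \<sigma>) (emb r))"
    using assms(1) U_rules_last[OF False] by (rule U_trs_step_U_rule)
  finally show "(trs_step (U_trs R))\<^sup>*\<^sup>* (subst (emb \<circ> \<sigma>) (emb l)) (subst (emb \<circ> \<sigma>) (emb r))" .
qed

lemma U_trs_simulates_cstep: "cstep R s t \<Longrightarrow> (trs_step (U_trs R))\<^sup>*\<^sup>* (emb s) (emb t)"
proof (induction rule: cstep.induct)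
  case (1 l r cs \<sigma> C)
  have "(trs_step (U_trs R))\<^sup>*\<^sup>* (emb (subst \<sigma> s)) (emb (subst \<sigma> t))" if "(s, t) \<in> set cs" for s t
  proof -
    let ?r = "\<lambda>x y. cstep R x y \<and> (trs_step (U_trs R))\<^sup>*\<^sup>* (emb x) (emb y)"
    have "?r\<^sup>*\<^sup>* (subst \<sigma> s) (subst \<sigma> t)"
      using bspec[OF 1(2) that] by simp
    then show ?thesis
      by (rule rtranclp_simulation[where r = ?r and h = emb, rotated]) blast
  qed
  then show ?case
    by (intro trs_steps_emb_ctxt U_trs_steps_root[OF 1(1)])
qed

theorem theorem29:
  fixes R :: "('f, 'v) crule set"
  assumes "infinite (UNIV :: 'v set)"
    and "dctrs3 R"
    and "terminating (cstep R)"
    and "preserves_irreducibility R"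
    and "confluent (trs_step (U_trs R))"
  shows "confluent (cstep R)"
proof (rule confluent_by_simulation[where h = emb])
  show "terminating (cstep R)" and "confluent (trs_step (U_trs R))"
    by fact+
  show "inj (emb :: ('f, 'v) term \<Rightarrow> _)"
    by (rule inj_map_funs) (simp add: inj_def)
  show "(trs_step (U_trs R))\<^sup>*\<^sup>* (emb x) (emb y)" if "cstep R x y" for x y
    using that by (rule U_trs_simulates_cstep)
  show "\<nexists>y. trs_step (U_trs R) (emb x) y" if "\<nexists>y. cstep R x y" for x
    using that \<open>preserves_irreducibility R\<close> unfolding preserves_irreducibility_def by blast
qed

end
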